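(* Let $\mu$ be a probability measure on $\mathbb{R}$. Let $n\in\mathbb{N}$ and let $\nu=\sum_{i=1}^n\nu^{(i)}$, where the $\nu^{(i)}$ are finite non-negative measures on $\mathbb{R}$ with $\nu^{(i)}(\mathbb{R})=a_i>0$. Assume that $H(a_i^{-1}\nu^{(i)})$ is finite for all $i$. Let $\nu_t=D_t^*(\nu)$ and $\nu_t^{(i)}=D_t^*(\nu^{(i)})$. Then $$\liminf_{t\to0}\frac{H(\mu*\nu_t)}{|\log t|}=\liminf_{t\to0}\frac{1}{|\log t|}\sum_{i=1}^na_iH(a_i^{-1}\mu*\nu_t^{(i)}).$$
   Context: For $t>0$, $D_t:\mathbb{R}\to\mathbb{R}$ is $x\mapsto tx$, and $D_t^*$ denotes push-forward by $D_t$. For non-negative measurable $q$, $H(q(x)\,dx)=\int q\log q\,dx$, even when $q\,dx$ is not a probability measure. *)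

theory Defs
  imports "HOL-Probability.Probability"
begin

definition has_lebesgue_density :: "real measure \<Rightarrow> (real \<Rightarrow> ennreal) \<Rightarrow> bool" where
  "has_lebesgue_density M q \<longleftrightarrow> q \<in> borel_measurable borel \<and> M = density lborel q"

definition ent :: "real measure \<Rightarrow> ereal" where
  "ent M = (if \<exists>q. has_lebesgue_density M q then
     (let q = (\<lambda>x. enn2real ((SOME q. has_lebesgue_density M q) x));
          f = (\<lambda>x. q x * ln (q x))
      in enn2ereal (\<integral>\<^sup>+ x. ennreal (f x) \<partial>lborel)
         - enn2ereal (\<integral>\<^sup>+ x. ennreal (- f x) \<partial>lborel))
   else \<infinity>)"

definition dil :: "real \<Rightarrow> real measure \<Rightarrow> real measure" where
  "dil t M = distr M borel (\<lambda>x. t * x)"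

end

theory Submission
  imports Defs "HOL-Real_Asymp.Real_Asymp"
begin

text \<open>Write \<nu>_i = g_i dx, so that \<mu> * D_t(\<nu>) has density s = \<Sum>_i G_i, where G_i is the
  density of \<mu> * D_t(\<nu>_i), again of total mass a_i. With \<phi>(x) = x log x, the inequalities
  \<Sum>_i \<phi>(x_i) \<le> \<phi>(\<Sum>_i x_i) \<le> \<Sum>_i \<phi>(x_i) + n \<Sum>_i x_i for x_i \<ge> 0, together with
  a_i \<phi>(x_i / a_i) = \<phi>(x_i) - x_i log a_i, give the pointwise bound
  |\<phi>(s) - \<Sum>_i a_i \<phi>(G_i / a_i)| \<le> c s with c = n + \<Sum>_i |log a_i|. Integrating, the two
  entropies in the theorem differ by at most c \<Sum>_i a_i, uniformly in t, and dividing by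
  |log t| \<rightarrow> \<infinity> the liminfs agree.\<close>

definition xlnx :: "real \<Rightarrow> real" where
  "xlnx x = x * ln x"

lemma mult_ln_div_le:
  fixes x y :: real
  assumes x: "0 \<le> x" and y: "0 < y"
  shows "x * ln (y / x) \<le> y"
proof (cases "x = 0")
  case False
  with x have "0 < x" by simp
  have "x * ln (y / x) \<le> x * (y / x - 1)"
    using \<open>0 < x\<close> y by (intro mult_left_mono ln_le_minus_one) auto
  also have "\<dots> = y - x"
    using \<open>0 < x\<close> by (simp add: field_simps)
  finally show ?thesis using x by simp
qed (use y in simp)

lemma xlnx_scale: "0 \<le> x \<Longrightarrow> 0 < a \<Longrightarrow> a * xlnx (x / a) = xlnx x - x * ln a"
  by (cases "x = 0") (auto simp: xlnx_def ln_div field_simps)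

lemma neg_xlnx_le_1:
  assumes "0 \<le> x"
  shows "- xlnx x \<le> 1"
proof (cases "x = 0")
  case False
  with assms have "0 < x" by simp
  then have "- xlnx x = x * ln (1 / x)"
    by (simp add: xlnx_def ln_div)
  also have "\<dots> \<le> 1"
    using assms by (rule mult_ln_div_le) simp
  finally show ?thesis .
qed (simp add: xlnx_def)

lemma max0_xlnx_mono:
  assumes "0 \<le> x" "x \<le> y"
  shows "max 0 (xlnx x) \<le> max 0 (xlnx y)"
proof (cases "x \<le> 1")
  case True
  with assms have "xlnx x \<le> 0"
    by (cases "x = 0") (auto simp: xlnx_def mult_nonneg_nonpos)
  then show ?thesis by simp
next
  case False
  with assms have "xlnx x \<le> xlnx y"
    unfolding xlnx_def by (intro mult_mono) auto
  then show ?thesis by simp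
qed

lemma max0_neg_xlnx_le:
  assumes x: "0 \<le> x" and xy: "x \<le> y"
  shows "max 0 (- xlnx x) \<le> max 0 (- xlnx y) + y"
proof (cases "1 \<le> y \<or> x = 0")
  case True
  then show ?thesis
    using neg_xlnx_le_1[OF x] x xy by (auto simp: xlnx_def)
next
  case False
  with x xy have "0 < x" "y < 1" by auto
  then have "- xlnx x = - x * ln y + x * ln (y / x)"
    using xy by (simp add: xlnx_def ln_div algebra_simps)
  also have "- x * ln y \<le> - y * ln y"
    using \<open>0 < x\<close> \<open>y < 1\<close> xy by (intro mult_right_mono_neg) auto
  also have "x * ln (y / x) \<le> y"
    using x \<open>0 < x\<close> xy by (intro mult_ln_div_le) auto
  finally have "- xlnx x \<le> - xlnx y + y"
    by (simp add: xlnx_def)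
  then show ?thesis
    using \<open>0 < x\<close> xy by (auto simp: max_def)
qed

lemma sum_xlnx_le_xlnx_sum:
  assumes "finite I" "\<And>i. i \<in> I \<Longrightarrow> 0 \<le> x i"
  shows "(\<Sum>i\<in>I. xlnx (x i)) \<le> xlnx (\<Sum>i\<in>I. x i)"
proof -
  let ?s = "\<Sum>i\<in>I. x i"
  have "xlnx (x i) \<le> x i * ln ?s" if i: "i \<in> I" for i
  proof (cases "x i = 0")
    case False
    with assms i have "0 < x i" by force
    moreover have "x i \<le> ?s"
      using assms i by (intro member_le_sum) auto
    ultimately show ?thesis
      by (simp add: xlnx_def)
  qed (simp add: xlnx_def)
  then have "(\<Sum>i\<in>I. xlnx (x i)) \<le> (\<Sum>i\<in>I. x i * ln ?s)"
    by (rule sum_mono)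
  also have "\<dots> = xlnx ?s"
    by (simp add: xlnx_def sum_distrib_right)
  finally show ?thesis .
qed

lemma xlnx_sum_le:
  assumes "finite I" "\<And>i. i \<in> I \<Longrightarrow> 0 \<le> x i"
  shows "xlnx (\<Sum>i\<in>I. x i) \<le> (\<Sum>i\<in>I. xlnx (x i)) + real (card I) * (\<Sum>i\<in>I. x i)"
proof -
  let ?s = "\<Sum>i\<in>I. x i"
  have "x i * ln ?s \<le> xlnx (x i) + ?s" if i: "i \<in> I" for i
  proof (cases "x i = 0")
    case False
    with assms i have "0 < x i" by force
    moreover have "x i \<le> ?s"
      using assms i by (intro member_le_sum) auto
    ultimately have "x i * ln ?s = xlnx (x i) + x i * ln (?s / x i)"
      by (simp add: xlnx_def ln_div algebra_simps)
    also have "x i * ln (?s / x i) \<le> ?s"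
      using \<open>0 < x i\<close> \<open>x i \<le> ?s\<close> by (intro mult_ln_div_le) auto
    finally show ?thesis by simp
  next
    case True
    have "0 \<le> ?s"
      using assms by (intro sum_nonneg) auto
    with True show ?thesis
      by (simp add: xlnx_def)
  qed
  then have "(\<Sum>i\<in>I. x i * ln ?s) \<le> (\<Sum>i\<in>I. xlnx (x i) + ?s)"
    by (rule sum_mono)
  then show ?thesis
    by (simp add: xlnx_def sum_distrib_right sum.distrib)
qed

lemma xlnx_sum_scaled_close:
  fixes x a :: "'i \<Rightarrow> real"
  assumes I: "finite I" and x_nonneg: "\<And>i. i \<in> I \<Longrightarrow> 0 \<le> x i"
    and a_pos: "\<And>i. i \<in> I \<Longrightarrow> 0 < a i"
  shows "\<bar>xlnx (\<Sum>i\<in>I. x i) - (\<Sum>i\<in>I. a i * xlnx (x i / a i))\<bar>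
           \<le> (real (card I) + (\<Sum>i\<in>I. \<bar>ln (a i)\<bar>)) * (\<Sum>i\<in>I. x i)"
proof -
  let ?s = "\<Sum>i\<in>I. x i"
  have scaled: "(\<Sum>i\<in>I. a i * xlnx (x i / a i)) = (\<Sum>i\<in>I. xlnx (x i)) - (\<Sum>i\<in>I. x i * ln (a i))"
    using x_nonneg a_pos by (simp add: xlnx_scale sum_subtractf)
  have "\<bar>\<Sum>i\<in>I. x i * ln (a i)\<bar> \<le> (\<Sum>i\<in>I. ?s * \<bar>ln (a i)\<bar>)"
  proof -
    have "\<bar>x i * ln (a i)\<bar> \<le> ?s * \<bar>ln (a i)\<bar>" if "i \<in> I" for i
      using that x_nonneg I by (auto simp: abs_mult intro!: mult_right_mono member_le_sum)
    then show ?thesis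
      by (intro order.trans[OF sum_abs] sum_mono)
  qed
  then have "\<bar>\<Sum>i\<in>I. x i * ln (a i)\<bar> \<le> ?s * (\<Sum>i\<in>I. \<bar>ln (a i)\<bar>)"
    by (simp add: sum_distrib_left)
  with sum_xlnx_le_xlnx_sum[of I x] xlnx_sum_le[of I x] I x_nonneg show ?thesis
    unfolding scaled by (simp add: algebra_simps abs_le_iff)
qed

lemma max0_scaled_xlnx_le:
  assumes x: "0 \<le> x" and xs: "x \<le> s" and a: "0 < a" and c: "1 + \<bar>ln a\<bar> \<le> c"
  shows "max 0 (a * xlnx (x / a)) \<le> max 0 (xlnx s) + c * s"
proof -
  have "\<bar>x * ln a\<bar> \<le> s * \<bar>ln a\<bar>"
    using x xs by (auto simp: abs_mult intro: mult_right_mono)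
  moreover have "max 0 (xlnx x) \<le> max 0 (xlnx s)"
    using x xs by (rule max0_xlnx_mono)
  moreover have "(1 + \<bar>ln a\<bar>) * s \<le> c * s"
    using c x xs by (intro mult_right_mono) auto
  ultimately show ?thesis
    using xlnx_scale[OF x a] x xs by (auto simp: algebra_simps abs_le_iff max_def split: if_splits)
qed

lemma max0_neg_scaled_xlnx_le:
  assumes x: "0 \<le> x" and xs: "x \<le> s" and a: "0 < a" and c: "1 + \<bar>ln a\<bar> \<le> c"
  shows "max 0 (- (a * xlnx (x / a))) \<le> max 0 (- xlnx s) + c * s"
proof -
  have "\<bar>x * ln a\<bar> \<le> s * \<bar>ln a\<bar>"
    using x xs by (auto simp: abs_mult intro: mult_right_mono)
  moreover have "max 0 (- xlnx x) \<le> max 0 (- xlnx s) + s"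
    using x xs by (rule max0_neg_xlnx_le)
  moreover have "(1 + \<bar>ln a\<bar>) * s \<le> c * s"
    using c x xs by (intro mult_right_mono) auto
  ultimately show ?thesis
    using xlnx_scale[OF x a] x xs by (auto simp: algebra_simps abs_le_iff max_def split: if_splits)
qed

text \<open>The integral as it appears in \<^const>\<open>ent\<close>; note that \<infinity> - \<infinity> = \<infinity> in \<^typ>\<open>ereal\<close>, so the
  value is \<infinity> as soon as the positive part is not integrable.\<close>

definition ereal_integral :: "(real \<Rightarrow> real) \<Rightarrow> ereal" where
  "ereal_integral h =
     enn2ereal (\<integral>\<^sup>+x. ennreal (h x) \<partial>lborel) - enn2ereal (\<integral>\<^sup>+x. ennreal (- h x) \<partial>lborel)"

lemma ereal_integral_cong_AE:
  "AE x in lborel. h x = h' x \<Longrightarrow> ereal_integral h = ereal_integral h'"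
  unfolding ereal_integral_def
  by (intro arg_cong2[where f = "\<lambda>a b. enn2ereal a - enn2ereal b"] nn_integral_cong_AE)
     (auto elim!: eventually_mono)

lemma ent_density_eq:
  assumes [measurable]: "G \<in> borel_measurable borel"
  shows "ent (density lborel G) = ereal_integral (\<lambda>x. xlnx (enn2real (G x)))"
proof -
  have ex: "\<exists>q. has_lebesgue_density (density lborel G) q"
    unfolding has_lebesgue_density_def using assms by blast
  define q where "q = (SOME q. has_lebesgue_density (density lborel G) q)"
  have "has_lebesgue_density (density lborel G) q"
    unfolding q_def by (rule someI_ex[OF ex])
  then have [measurable]: "q \<in> borel_measurable borel" and "density lborel G = density lborel q"
    by (auto simp: has_lebesgue_density_def)
  then have "AE x in lborel. G x = q x"
    by (intro sigma_finite_measure.density_unique[OF sigma_finite_lborel]) auto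
  then have "ereal_integral (\<lambda>x. xlnx (enn2real (q x))) = ereal_integral (\<lambda>x. xlnx (enn2real (G x)))"
    by (intro ereal_integral_cong_AE) (auto elim!: eventually_mono)
  then show ?thesis
    using ex by (simp add: ent_def Let_def q_def[symmetric] ereal_integral_def xlnx_def)
qed

lemma ereal_integral_eq_integral:
  assumes "integrable lborel h"
  shows "ereal_integral h = ereal (integral\<^sup>L lborel h)"
proof -
  have "(\<integral>\<^sup>+x. ennreal (h x) \<partial>lborel) \<noteq> \<infinity>" "(\<integral>\<^sup>+x. ennreal (- h x) \<partial>lborel) \<noteq> \<infinity>"
    using assms by (auto simp: real_integrable_def)
  then show ?thesis
    unfolding ereal_integral_def real_lebesgue_integral_def[OF assms]
    by (cases "\<integral>\<^sup>+x. ennreal (h x) \<partial>lborel" rule: ennreal_cases;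
        cases "\<integral>\<^sup>+x. ennreal (- h x) \<partial>lborel" rule: ennreal_cases) simp_all
qed

lemma ereal_integral_cmult:
  assumes a: "0 < a" and [measurable]: "h \<in> borel_measurable borel"
  shows "ereal a * ereal_integral h = ereal_integral (\<lambda>x. a * h x)"
proof -
  have pos: "(\<integral>\<^sup>+x. ennreal (a * h x) \<partial>lborel) = ennreal a * (\<integral>\<^sup>+x. ennreal (h x) \<partial>lborel)"
    using a by (simp add: ennreal_mult' nn_integral_cmult)
  have "(\<lambda>x. ennreal (- (a * h x))) = (\<lambda>x. ennreal a * ennreal (- h x))"
    using a by (auto simp: ennreal_mult'[symmetric])
  then have neg: "(\<integral>\<^sup>+x. ennreal (- (a * h x)) \<partial>lborel) = ennreal a * (\<integral>\<^sup>+x. ennreal (- h x) \<partial>lborel)"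
    by (simp add: nn_integral_cmult)
  have "ereal a * (enn2ereal p - enn2ereal q) = enn2ereal (ennreal a * p) - enn2ereal (ennreal a * q)"
    for p q
    using a
    by (cases p rule: ennreal_cases; cases q rule: ennreal_cases)
       (auto simp: ennreal_mult'[symmetric] ennreal_mult_top ennreal_top_mult
          ereal_mult_minus_right right_diff_distrib)
  then show ?thesis
    unfolding ereal_integral_def pos neg .
qed

lemma ennreal_sum_le_sum_ennreal:
  fixes u :: "'i \<Rightarrow> real"
  assumes "finite I"
  shows "ennreal (\<Sum>i\<in>I. u i) \<le> (\<Sum>i\<in>I. ennreal (u i))"
  using assms
proof (induction I rule: finite_induct)
  case (insert i I)
  have "ennreal (u i + (\<Sum>j\<in>I. u j)) \<le> ennreal (max 0 (u i) + max 0 (\<Sum>j\<in>I. u j))"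
    by (intro ennreal_leI) auto
  also have "\<dots> = ennreal (u i) + ennreal (\<Sum>j\<in>I. u j)"
    by (subst ennreal_plus) (auto simp: ennreal_max_0)
  also have "\<dots> \<le> ennreal (u i) + (\<Sum>j\<in>I. ennreal (u j))"
    using insert by (intro add_left_mono)
  finally show ?case
    using insert by simp
qed simp

lemma nn_integral_le_plus_bound:
  fixes v w F :: "real \<Rightarrow> real"
  assumes [measurable]: "v \<in> borel_measurable borel" "w \<in> borel_measurable borel"
    "F \<in> borel_measurable borel"
    and F: "\<And>x. 0 \<le> F x" and FK: "(\<integral>\<^sup>+x. ennreal (F x) \<partial>lborel) \<le> ennreal K"
    and le: "AE x in lborel. v x \<le> max 0 (w x) + F x"
  shows "(\<integral>\<^sup>+x. ennreal (v x) \<partial>lborel) \<le> (\<integral>\<^sup>+x. ennreal (w x) \<partial>lborel) + ennreal K"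
proof -
  from le have "AE x in lborel. ennreal (v x) \<le> ennreal (w x) + ennreal (F x)"
  proof eventually_elim
    case (elim x)
    then have "ennreal (v x) \<le> ennreal (max 0 (w x) + F x)"
      by (rule ennreal_leI)
    also have "\<dots> = ennreal (w x) + ennreal (F x)"
      using F by (subst ennreal_plus) (auto simp: ennreal_max_0)
    finally show ?case .
  qed
  then have "(\<integral>\<^sup>+x. ennreal (v x) \<partial>lborel) \<le> (\<integral>\<^sup>+x. ennreal (w x) + ennreal (F x) \<partial>lborel)"
    by (rule nn_integral_mono_AE)
  also have "\<dots> = (\<integral>\<^sup>+x. ennreal (w x) \<partial>lborel) + (\<integral>\<^sup>+x. ennreal (F x) \<partial>lborel)"
    by (simp add: nn_integral_add)
  also have "\<dots> \<le> (\<integral>\<^sup>+x. ennreal (w x) \<partial>lborel) + ennreal K"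
    using FK by (rule add_left_mono)
  finally show ?thesis .
qed

lemma ereal_integral_eq_PInf_iff:
  "ereal_integral h = \<infinity> \<longleftrightarrow> (\<integral>\<^sup>+x. ennreal (h x) \<partial>lborel) = \<infinity>"
  unfolding ereal_integral_def
  by (cases "\<integral>\<^sup>+x. ennreal (h x) \<partial>lborel" rule: ennreal_cases;
      cases "\<integral>\<^sup>+x. ennreal (- h x) \<partial>lborel" rule: ennreal_cases) auto

lemma ereal_integral_eq_MInf_iff:
  "ereal_integral h = - \<infinity> \<longleftrightarrow>
     (\<integral>\<^sup>+x. ennreal (h x) \<partial>lborel) \<noteq> \<infinity> \<and> (\<integral>\<^sup>+x. ennreal (- h x) \<partial>lborel) = \<infinity>"
  unfolding ereal_integral_def
  by (cases "\<integral>\<^sup>+x. ennreal (h x) \<partial>lborel" rule: ennreal_cases;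
      cases "\<integral>\<^sup>+x. ennreal (- h x) \<partial>lborel" rule: ennreal_cases) auto

lemma sum_ereal_eq_MInf:
  fixes f :: "'i \<Rightarrow> ereal"
  assumes "finite I" "i \<in> I" "f i = - \<infinity>" "\<And>j. j \<in> I \<Longrightarrow> f j \<noteq> \<infinity>"
  shows "sum f I = - \<infinity>"
proof -
  have "sum f I \<noteq> \<infinity>" "\<bar>sum f I\<bar> = \<infinity>"
    using assms by (auto simp: sum_Pinfty sum_Inf intro!: bexI[of _ i])
  then show ?thesis
    by (cases "sum f I") auto
qed

lemma nn_integral_sum_le:
  fixes u :: "'i \<Rightarrow> 'a \<Rightarrow> real"
  assumes "finite I" "\<And>i. i \<in> I \<Longrightarrow> u i \<in> borel_measurable M"
  shows "(\<integral>\<^sup>+x. ennreal (\<Sum>i\<in>I. u i x) \<partial>M) \<le> (\<Sum>i\<in>I. \<integral>\<^sup>+x. ennreal (u i x) \<partial>M)"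
proof -
  have "(\<integral>\<^sup>+x. ennreal (\<Sum>i\<in>I. u i x) \<partial>M) \<le> (\<integral>\<^sup>+x. (\<Sum>i\<in>I. ennreal (u i x)) \<partial>M)"
    using assms(1) by (intro nn_integral_mono ennreal_sum_le_sum_ennreal)
  also have "\<dots> = (\<Sum>i\<in>I. \<integral>\<^sup>+x. ennreal (u i x) \<partial>M)"
    using assms by (intro nn_integral_sum) auto
  finally show ?thesis .
qed

lemma nn_integral_le_sum_plus_bound:
  fixes h F :: "real \<Rightarrow> real" and u :: "'i \<Rightarrow> real \<Rightarrow> real"
  assumes I: "finite I" and [measurable]: "h \<in> borel_measurable borel" "F \<in> borel_measurable borel"
    and u_meas [measurable]: "\<And>i. i \<in> I \<Longrightarrow> u i \<in> borel_measurable borel"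
    and F: "\<And>x. 0 \<le> F x" and FK: "(\<integral>\<^sup>+x. ennreal (F x) \<partial>lborel) \<le> ennreal K"
    and le: "AE x in lborel. h x \<le> (\<Sum>i\<in>I. u i x) + F x"
  shows "(\<integral>\<^sup>+x. ennreal (h x) \<partial>lborel) \<le> (\<Sum>i\<in>I. \<integral>\<^sup>+x. ennreal (u i x) \<partial>lborel) + ennreal K"
proof -
  have [measurable]: "(\<lambda>x. \<Sum>i\<in>I. u i x) \<in> borel_measurable borel"
    using u_meas by measurable
  have "(\<integral>\<^sup>+x. ennreal (h x) \<partial>lborel) \<le> (\<integral>\<^sup>+x. ennreal (\<Sum>i\<in>I. u i x) \<partial>lborel) + ennreal K"
    using le by (intro nn_integral_le_plus_bound[OF _ _ _ F FK]) (auto elim!: eventually_mono)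
  also have "\<dots> \<le> (\<Sum>i\<in>I. \<integral>\<^sup>+x. ennreal (u i x) \<partial>lborel) + ennreal K"
    using I by (intro add_right_mono nn_integral_sum_le) auto
  finally show ?thesis .
qed

lemma integral_sum_close:
  fixes h F :: "'a \<Rightarrow> real" and u :: "'i \<Rightarrow> 'a \<Rightarrow> real"
  assumes "finite I" "integrable M h" "\<And>i. i \<in> I \<Longrightarrow> integrable M (u i)"
    and [measurable]: "F \<in> borel_measurable M"
    and F: "\<And>x. 0 \<le> F x" and FK: "(\<integral>\<^sup>+x. ennreal (F x) \<partial>M) \<le> ennreal K" and K: "0 \<le> K"
    and close: "AE x in M. \<bar>h x - (\<Sum>i\<in>I. u i x)\<bar> \<le> F x"
  shows "\<bar>integral\<^sup>L M h - (\<Sum>i\<in>I. integral\<^sup>L M (u i))\<bar> \<le> K"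
proof -
  have "integrable M F"
    using FK F by (intro integrableI_nonneg) (auto simp: less_top[symmetric] top_unique)
  have "integral\<^sup>L M h - (\<Sum>i\<in>I. integral\<^sup>L M (u i)) = integral\<^sup>L M (\<lambda>x. h x - (\<Sum>i\<in>I. u i x))"
    using assms by (simp add: integral_diff integral_sum)
  also have "\<bar>\<dots>\<bar> \<le> integral\<^sup>L M (\<lambda>x. \<bar>h x - (\<Sum>i\<in>I. u i x)\<bar>)"
    using integral_norm_bound[of M "\<lambda>x. h x - (\<Sum>i\<in>I. u i x)"] by simp
  also have "\<dots> \<le> integral\<^sup>L M F"
    using assms \<open>integrable M F\<close> by (intro integral_mono_AE) auto
  also have "\<dots> = enn2real (\<integral>\<^sup>+x. ennreal (F x) \<partial>M)"
    using F by (intro integral_eq_nn_integral) auto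
  also have "\<dots> \<le> enn2real (ennreal K)"
    using FK by (intro enn2real_mono) auto
  finally show ?thesis
    using K by simp
qed

lemma ereal_integral_sum_eq_infinite:
  fixes h :: "real \<Rightarrow> real" and u :: "'i \<Rightarrow> real \<Rightarrow> real"
  assumes I: "finite I"
    and pos: "\<And>i. i \<in> I \<Longrightarrow>
      (\<integral>\<^sup>+x. ennreal (u i x) \<partial>lborel) \<le> (\<integral>\<^sup>+x. ennreal (h x) \<partial>lborel) + ennreal K"
    and neg: "\<And>i. i \<in> I \<Longrightarrow>
      (\<integral>\<^sup>+x. ennreal (- u i x) \<partial>lborel) \<le> (\<integral>\<^sup>+x. ennreal (- h x) \<partial>lborel) + ennreal K"
    and pos_h: "(\<integral>\<^sup>+x. ennreal (h x) \<partial>lborel) \<le> (\<Sum>i\<in>I. \<integral>\<^sup>+x. ennreal (u i x) \<partial>lborel) + ennreal K"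
    and not_integrable:
      "\<exists>i\<in>I. (\<integral>\<^sup>+x. ennreal (u i x) \<partial>lborel) = \<infinity> \<or> (\<integral>\<^sup>+x. ennreal (- u i x) \<partial>lborel) = \<infinity>"
  shows "ereal_integral h = (\<Sum>i\<in>I. ereal_integral (u i))"
proof -
  let ?P = "\<lambda>v. \<integral>\<^sup>+x. ennreal (v x) \<partial>lborel"
  show ?thesis
  proof (cases "\<exists>i\<in>I. ?P (u i) = \<infinity>")
    case True
    then obtain i where "i \<in> I" "?P (u i) = \<infinity>"
      by blast
    with pos[of i] have "ereal_integral h = \<infinity>"
      by (simp add: top_unique ereal_integral_eq_PInf_iff)
    moreover have "(\<Sum>i\<in>I. ereal_integral (u i)) = \<infinity>"
      using \<open>i \<in> I\<close> \<open>?P (u i) = \<infinity>\<close> I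
      by (auto simp: sum_Pinfty ereal_integral_eq_PInf_iff intro!: bexI[of _ i])
    ultimately show ?thesis
      by simp
  next
    case pos_u_fin: False
    with not_integrable obtain i where "i \<in> I" "?P (\<lambda>x. - u i x) = \<infinity>"
      by blast
    from pos_u_fin pos_h I have "?P h \<noteq> \<infinity>"
      by (auto simp: top_unique)
    with neg[of i] \<open>i \<in> I\<close> \<open>?P (\<lambda>x. - u i x) = \<infinity>\<close> have "ereal_integral h = - \<infinity>"
      by (simp add: top_unique ereal_integral_eq_MInf_iff)
    moreover have "ereal_integral (u i) = - \<infinity>"
      using pos_u_fin \<open>i \<in> I\<close> \<open>?P (\<lambda>x. - u i x) = \<infinity>\<close>
      by (simp add: ereal_integral_eq_MInf_iff)
    ultimately show ?thesis
      using pos_u_fin I \<open>i \<in> I\<close>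
      by (simp add: sum_ereal_eq_MInf ereal_integral_eq_PInf_iff)
  qed
qed

text \<open>The one-sided hypotheses take care of the infinite cases: if the positive (negative) part of
  some u i is not integrable, neither is that of h, and both sides are \<infinity> (-\<infinity>).\<close>

lemma ereal_integral_sum_close:
  fixes h F :: "real \<Rightarrow> real" and u :: "'i \<Rightarrow> real \<Rightarrow> real"
  assumes I: "finite I"
    and [measurable]: "h \<in> borel_measurable borel" "F \<in> borel_measurable borel"
    and u_meas [measurable]: "\<And>i. i \<in> I \<Longrightarrow> u i \<in> borel_measurable borel"
    and F: "\<And>x. 0 \<le> F x" and FK: "(\<integral>\<^sup>+x. ennreal (F x) \<partial>lborel) \<le> ennreal K" and K: "0 \<le> K"
    and close: "AE x in lborel. \<bar>h x - (\<Sum>i\<in>I. u i x)\<bar> \<le> F x"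
    and pos: "\<And>i. i \<in> I \<Longrightarrow> AE x in lborel. max 0 (u i x) \<le> max 0 (h x) + F x"
    and neg: "\<And>i. i \<in> I \<Longrightarrow> AE x in lborel. max 0 (- u i x) \<le> max 0 (- h x) + F x"
  shows "ereal_integral h \<le> (\<Sum>i\<in>I. ereal_integral (u i)) + K"
    and "(\<Sum>i\<in>I. ereal_integral (u i)) \<le> ereal_integral h + K"
proof -
  let ?P = "\<lambda>v. \<integral>\<^sup>+x. ennreal (v x) \<partial>lborel"
  let ?Y = "\<Sum>i\<in>I. ereal_integral (u i)"
  have P_h: "?P h \<le> (\<Sum>i\<in>I. ?P (u i)) + ennreal K"
    and N_h: "?P (\<lambda>x. - h x) \<le> (\<Sum>i\<in>I. ?P (\<lambda>x. - u i x)) + ennreal K"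
    using close
    by (intro nn_integral_le_sum_plus_bound[OF I _ _ _ F FK]; auto simp: sum_negf elim!: eventually_mono)+
  have P_u: "?P (u i) \<le> ?P h + ennreal K" and N_u: "?P (\<lambda>x. - u i x) \<le> ?P (\<lambda>x. - h x) + ennreal K"
    if "i \<in> I" for i
    using pos[OF that] neg[OF that] that
    by (intro nn_integral_le_plus_bound[OF _ _ _ F FK]; auto elim!: eventually_mono)+
  have "ereal_integral h = ?Y \<or>
        (\<exists>r s. ereal_integral h = ereal r \<and> ?Y = ereal s \<and> \<bar>r - s\<bar> \<le> K)"
  proof (cases "\<exists>i\<in>I. ?P (u i) = \<infinity> \<or> ?P (\<lambda>x. - u i x) = \<infinity>")
    case True
    then show ?thesis
      using ereal_integral_sum_eq_infinite[OF I P_u N_u P_h] by simp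
  next
    case False
    with P_h N_h I have "integrable lborel h" "\<And>i. i \<in> I \<Longrightarrow> integrable lborel (u i)"
      by (auto simp: real_integrable_def top_unique)
    with integral_sum_close[OF I _ _ _ F FK K close] show ?thesis
      by (auto simp: ereal_integral_eq_integral)
  qed
  then show "ereal_integral h \<le> ?Y + K" "?Y \<le> ereal_integral h + K"
    using K by (auto intro: add_increasing2)
qed

lemma scale_measure_density:
  assumes [measurable]: "f \<in> borel_measurable M"
  shows "scale_measure r (density M f) = density M (\<lambda>x. r * f x)"
proof (rule measure_eqI)
  fix A assume "A \<in> sets (scale_measure r (density M f))"
  then have [measurable]: "A \<in> sets M" by simp
  show "emeasure (scale_measure r (density M f)) A = emeasure (density M (\<lambda>x. r * f x)) A"
    by (simp add: emeasure_density nn_integral_cmult[symmetric] mult.assoc)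
qed simp

lemma scaled_ent_density_eq:
  assumes a: "0 < a" and [measurable]: "G \<in> borel_measurable borel"
  shows "ereal a * ent (scale_measure (ennreal (1 / a)) (density lborel G))
       = ereal_integral (\<lambda>x. a * xlnx (enn2real (G x) / a))"
proof -
  have "ent (scale_measure (ennreal (1 / a)) (density lborel G))
      = ereal_integral (\<lambda>x. xlnx (enn2real (ennreal (1 / a) * G x)))"
    by (simp add: scale_measure_density ent_density_eq)
  also have "\<dots> = ereal_integral (\<lambda>x. xlnx (enn2real (G x) / a))"
    using a by (simp add: enn2real_mult)
  finally show ?thesis
    using a by (simp add: ereal_integral_cmult xlnx_def)
qed

lemma ent_density_sum_eq:
  fixes G :: "'i \<Rightarrow> real \<Rightarrow> ennreal"
  assumes I: "finite I" and [measurable]: "\<And>i. i \<in> I \<Longrightarrow> G i \<in> borel_measurable borel"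
    and G_fin: "\<And>i. i \<in> I \<Longrightarrow> (\<integral>\<^sup>+x. G i x \<partial>lborel) \<noteq> \<infinity>"
  shows "ent (density lborel (\<lambda>x. \<Sum>i\<in>I. G i x))
       = ereal_integral (\<lambda>x. xlnx (\<Sum>i\<in>I. enn2real (G i x)))"
proof -
  have "AE x in lborel. \<forall>i\<in>I. G i x \<noteq> \<infinity>"
    using I G_fin by (intro AE_finite_allI nn_integral_PInf_AE) auto
  then have "AE x in lborel. xlnx (enn2real (\<Sum>i\<in>I. G i x)) = xlnx (\<Sum>i\<in>I. enn2real (G i x))"
    by eventually_elim (simp add: enn2real_sum less_top)
  then show ?thesis
    using I by (simp add: ent_density_eq ereal_integral_cong_AE)
qed

lemma nn_integral_sum_enn2real_le:
  fixes G :: "'i \<Rightarrow> 'a \<Rightarrow> ennreal"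
  assumes "finite I" "\<And>i. i \<in> I \<Longrightarrow> G i \<in> borel_measurable M"
  shows "(\<integral>\<^sup>+x. ennreal (\<Sum>i\<in>I. enn2real (G i x)) \<partial>M) \<le> (\<Sum>i\<in>I. \<integral>\<^sup>+x. G i x \<partial>M)"
proof -
  have "(\<integral>\<^sup>+x. ennreal (\<Sum>i\<in>I. enn2real (G i x)) \<partial>M) \<le> (\<integral>\<^sup>+x. (\<Sum>i\<in>I. G i x) \<partial>M)"
    by (intro nn_integral_mono) (simp add: sum_mono ennreal_enn2real_if flip: sum_ennreal)
  also have "\<dots> = (\<Sum>i\<in>I. \<integral>\<^sup>+x. G i x \<partial>M)"
    using assms by (intro nn_integral_sum) auto
  finally show ?thesis .
qed

lemma one_plus_abs_le_card_plus_sum_abs: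
  fixes f :: "'i \<Rightarrow> real"
  assumes "finite I" "i \<in> I"
  shows "1 + \<bar>f i\<bar> \<le> real (card I) + (\<Sum>j\<in>I. \<bar>f j\<bar>)"
proof -
  have "1 \<le> card I"
    using assms by (metis card_0_eq empty_iff less_one not_le)
  moreover have "\<bar>f i\<bar> \<le> (\<Sum>j\<in>I. \<bar>f j\<bar>)"
    using assms by (intro member_le_sum) auto
  ultimately show ?thesis
    by simp
qed

lemma ent_density_sum_close:
  fixes G :: "'i \<Rightarrow> real \<Rightarrow> ennreal" and a :: "'i \<Rightarrow> real"
  assumes I: "finite I" and G_meas [measurable]: "\<And>i. i \<in> I \<Longrightarrow> G i \<in> borel_measurable borel"
    and a_pos: "\<And>i. i \<in> I \<Longrightarrow> 0 < a i"
    and G_mass: "\<And>i. i \<in> I \<Longrightarrow> (\<integral>\<^sup>+x. G i x \<partial>lborel) = ennreal (a i)"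
  defines "C \<equiv> (real (card I) + (\<Sum>i\<in>I. \<bar>ln (a i)\<bar>)) * (\<Sum>i\<in>I. a i)"
  shows "ent (density lborel (\<lambda>x. \<Sum>i\<in>I. G i x))
           \<le> (\<Sum>i\<in>I. ereal (a i) * ent (scale_measure (ennreal (1 / a i)) (density lborel (G i)))) + C"
      (is "?X \<le> ?Y + _")
    and "(\<Sum>i\<in>I. ereal (a i) * ent (scale_measure (ennreal (1 / a i)) (density lborel (G i))))
           \<le> ent (density lborel (\<lambda>x. \<Sum>i\<in>I. G i x)) + C"
proof -
  define f where "f i x = enn2real (G i x)" for i x
  define s where "s x = (\<Sum>i\<in>I. f i x)" for x
  define u where "u i x = a i * xlnx (f i x / a i)" for i x
  define c where "c = real (card I) + (\<Sum>i\<in>I. \<bar>ln (a i)\<bar>)"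
  have f_meas [measurable]: "f i \<in> borel_measurable borel" if "i \<in> I" for i
    unfolding f_def[abs_def] using that by measurable
  have [measurable]: "s \<in> borel_measurable borel" "(\<lambda>x. xlnx (s x)) \<in> borel_measurable borel"
    unfolding s_def[abs_def] xlnx_def using f_meas by measurable
  have [measurable]: "u i \<in> borel_measurable borel" if "i \<in> I" for i
    unfolding u_def[abs_def] xlnx_def using that by measurable
  have f_nonneg: "0 \<le> f i x" for i x
    by (simp add: f_def)
  have f_le_s: "f i x \<le> s x" if "i \<in> I" for i x
    unfolding s_def using I that f_nonneg by (intro member_le_sum) auto
  have c_nonneg: "0 \<le> c"
    unfolding c_def by (intro add_nonneg_nonneg sum_nonneg) auto
  have X: "?X = ereal_integral (\<lambda>x. xlnx (s x))"
    unfolding s_def f_def using I G_mass by (subst ent_density_sum_eq) auto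
  have Y: "?Y = (\<Sum>i\<in>I. ereal_integral (u i))"
    using a_pos by (intro sum.cong) (simp_all add: scaled_ent_density_eq u_def[abs_def] f_def)
  have "(\<integral>\<^sup>+x. ennreal (c * s x) \<partial>lborel) = ennreal c * (\<integral>\<^sup>+x. ennreal (s x) \<partial>lborel)"
    using c_nonneg by (simp add: ennreal_mult' nn_integral_cmult)
  also have "\<dots> \<le> ennreal c * (\<Sum>i\<in>I. \<integral>\<^sup>+x. G i x \<partial>lborel)"
    unfolding s_def f_def using I by (intro mult_left_mono nn_integral_sum_enn2real_le) auto
  also have "\<dots> = ennreal C"
    using G_mass a_pos c_nonneg by (simp add: C_def c_def[symmetric] ennreal_mult' less_imp_le)
  finally have mass: "(\<integral>\<^sup>+x. ennreal (c * s x) \<partial>lborel) \<le> ennreal C" .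
  have c_ge: "1 + \<bar>ln (a i)\<bar> \<le> c" if "i \<in> I" for i
    unfolding c_def using I that by (rule one_plus_abs_le_card_plus_sum_abs)
  have close: "AE x in lborel. \<bar>xlnx (s x) - (\<Sum>i\<in>I. u i x)\<bar> \<le> c * s x"
    unfolding s_def u_def c_def using I f_nonneg a_pos by (intro AE_I2 xlnx_sum_scaled_close) auto
  have pos: "AE x in lborel. max 0 (u i x) \<le> max 0 (xlnx (s x)) + c * s x" if "i \<in> I" for i
    unfolding u_def
    by (intro AE_I2 max0_scaled_xlnx_le f_nonneg f_le_s[OF that] a_pos[OF that] c_ge[OF that])
  have neg: "AE x in lborel. max 0 (- u i x) \<le> max 0 (- xlnx (s x)) + c * s x" if "i \<in> I" for i
    unfolding u_def
    by (intro AE_I2 max0_neg_scaled_xlnx_le f_nonneg f_le_s[OF that] a_pos[OF that] c_ge[OF that])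
  have F_nonneg: "0 \<le> c * s x" for x
    unfolding s_def using c_nonneg f_nonneg by (simp add: sum_nonneg)
  have C_nonneg: "0 \<le> C"
    unfolding C_def using a_pos
    by (intro mult_nonneg_nonneg add_nonneg_nonneg sum_nonneg) (auto intro: less_imp_le)
  note close_sums = ereal_integral_sum_close[OF I _ _ _ F_nonneg mass C_nonneg close pos neg]
  show "?X \<le> ?Y + C" "?Y \<le> ?X + C"
    unfolding X Y by (rule close_sums; measurable)+
qed

lemma ex_density_if_scaled_ent_finite:
  assumes "ent (scale_measure (ennreal (1 / a)) M) \<noteq> \<infinity>" and a: "0 < a"
  shows "\<exists>g. g \<in> borel_measurable borel \<and> M = density lborel g"
proof -
  obtain q where [measurable]: "q \<in> borel_measurable borel"
    and q: "scale_measure (ennreal (1 / a)) M = density lborel q"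
    using assms(1) by (auto simp: ent_def has_lebesgue_density_def split: if_splits)
  have "M = scale_measure (ennreal a) (scale_measure (ennreal (1 / a)) M)"
    using a by (simp flip: ennreal_mult)
  also have "\<dots> = density lborel (\<lambda>x. ennreal a * q x)"
    unfolding q by (rule scale_measure_density) simp
  finally show ?thesis
    by (intro exI[of _ "\<lambda>x. ennreal a * q x"]) simp
qed

lemma dil_density:
  assumes t: "0 < t" and [measurable]: "g \<in> borel_measurable borel"
  shows "dil t (density lborel g) = density lborel (\<lambda>x. ennreal (1 / t) * g (x / t))"
proof (rule measure_eqI)
  fix A assume "A \<in> sets (dil t (density lborel g))"
  then have [measurable]: "A \<in> sets borel"
    by (simp add: dil_def)
  have [measurable]: "(\<lambda>y. t * y) -` A \<in> sets borel"
    using measurable_sets[of "\<lambda>y. t * y" borel borel A] by simp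
  have "emeasure (dil t (density lborel g)) A = emeasure (density lborel g) ((\<lambda>y. t * y) -` A)"
    unfolding dil_def by (subst emeasure_distr) auto
  also have "\<dots> = \<integral>\<^sup>+y. g y * indicator A (t * y) \<partial>lborel"
    by (simp add: emeasure_density indicator_def)
  also have "\<dots> = (ennreal t * ennreal (1 / t)) * (\<integral>\<^sup>+y. g y * indicator A (t * y) \<partial>lborel)"
    using t by (simp flip: ennreal_mult)
  also have "\<dots> = ennreal t * (\<integral>\<^sup>+y. ennreal (1 / t) * g y * indicator A (t * y) \<partial>lborel)"
    by (simp add: nn_integral_cmult mult.assoc)
  also have "\<dots> = \<integral>\<^sup>+x. ennreal (1 / t) * g (x / t) * indicator A x \<partial>lborel"
    using t by (subst nn_integral_real_affine[where c = t and t = 0]) auto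
  also have "\<dots> = emeasure (density lborel (\<lambda>x. ennreal (1 / t) * g (x / t))) A"
    by (simp add: emeasure_density)
  finally show "emeasure (dil t (density lborel g)) A = emeasure (density lborel (\<lambda>x. ennreal (1 / t) * g (x / t))) A" .
qed (simp add: dil_def)

lemma convolution_density_right:
  fixes M :: "real measure" and g :: "real \<Rightarrow> ennreal"
  assumes M: "finite_measure M" and sets_M [measurable_cong]: "sets M = sets borel"
    and [measurable]: "g \<in> borel_measurable borel" and N: "finite_measure (density lborel g)"
  shows "M \<star> density lborel g = density lborel (\<lambda>x. \<integral>\<^sup>+y. g (x - y) \<partial>M)"
proof (rule measure_eqI)
  interpret M: finite_measure M by fact
  interpret pair_sigma_finite M lborel ..
  fix A assume "A \<in> sets (M \<star> density lborel g)"
  then have [measurable]: "A \<in> sets borel" by simp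
  have "emeasure (M \<star> density lborel g) A = \<integral>\<^sup>+y. \<integral>\<^sup>+x. indicator A (y + x) \<partial>density lborel g \<partial>M"
    using M N sets_M by (intro convolution_emeasure') auto
  also have "\<dots> = \<integral>\<^sup>+y. \<integral>\<^sup>+x. g (x - y) * indicator A x \<partial>lborel \<partial>M"
  proof (rule nn_integral_cong)
    fix y
    have "(\<integral>\<^sup>+x. indicator A (y + x) \<partial>density lborel g) = \<integral>\<^sup>+x. g x * indicator A (y + x) \<partial>lborel"
      by (simp add: nn_integral_density)
    also have "\<dots> = \<integral>\<^sup>+x. g (x - y) * indicator A x \<partial>lborel"
      by (subst nn_integral_real_affine[where c = 1 and t = y]) auto
    finally show "(\<integral>\<^sup>+x. indicator A (y + x) \<partial>density lborel g) = \<integral>\<^sup>+x. g (x - y) * indicator A x \<partial>lborel" .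
  qed
  also have "\<dots> = \<integral>\<^sup>+x. \<integral>\<^sup>+y. g (x - y) * indicator A x \<partial>M \<partial>lborel"
  proof -
    have "(\<lambda>(y, x). g (x - y) * indicator A x) \<in> borel_measurable (M \<Otimes>\<^sub>M lborel)"
      by measurable
    from Fubini'[OF this] show ?thesis by simp
  qed
  also have "\<dots> = \<integral>\<^sup>+x. (\<integral>\<^sup>+y. g (x - y) \<partial>M) * indicator A x \<partial>lborel"
    by (intro nn_integral_cong nn_integral_multc) measurable
  also have "\<dots> = emeasure (density lborel (\<lambda>x. \<integral>\<^sup>+y. g (x - y) \<partial>M)) A"
    by (subst emeasure_density) (auto intro: M.borel_measurable_nn_integral)
  finally show "emeasure (M \<star> density lborel g) A = emeasure (density lborel (\<lambda>x. \<integral>\<^sup>+y. g (x - y) \<partial>M)) A" .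
qed simp

definition conv_dil_density :: "real measure \<Rightarrow> real \<Rightarrow> (real \<Rightarrow> ennreal) \<Rightarrow> real \<Rightarrow> ennreal" where
  "conv_dil_density M t g x = (\<integral>\<^sup>+y. ennreal (1 / t) * g ((x - y) / t) \<partial>M)"

lemma borel_measurable_conv_dil_density [measurable]:
  assumes "finite_measure M" and [measurable_cong]: "sets M = sets borel"
    and [measurable]: "g \<in> borel_measurable borel"
  shows "conv_dil_density M t g \<in> borel_measurable borel"
proof -
  interpret finite_measure M by fact
  show ?thesis
    unfolding conv_dil_density_def[abs_def] by (rule borel_measurable_nn_integral) measurable
qed

lemma convolution_dil_density:
  assumes M: "finite_measure M" "sets M = sets borel" and t: "0 < t"
    and [measurable]: "g \<in> borel_measurable borel" and g_fin: "(\<integral>\<^sup>+x. g x \<partial>lborel) \<noteq> \<infinity>"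
  shows "M \<star> dil t (density lborel g) = density lborel (conv_dil_density M t g)"
proof -
  have "finite_measure (dil t (density lborel g))"
    unfolding dil_def using g_fin
    by (intro finite_measure.finite_measure_distr finite_measureI) (auto simp: emeasure_density)
  with M t show ?thesis
    by (simp add: dil_density convolution_density_right conv_dil_density_def[abs_def])
qed

lemma conv_dil_density_sum:
  assumes "finite I" and [measurable_cong]: "sets M = sets borel"
    and [measurable]: "\<And>i. i \<in> I \<Longrightarrow> g i \<in> borel_measurable borel"
  shows "conv_dil_density M t (\<lambda>x. \<Sum>i\<in>I. g i x) x = (\<Sum>i\<in>I. conv_dil_density M t (g i) x)"
  unfolding conv_dil_density_def sum_distrib_left
  by (rule nn_integral_sum) measurable

lemma nn_integral_conv_dil_density:
  assumes "prob_space M" and [measurable_cong]: "sets M = sets borel" and t: "0 < t"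
    and [measurable]: "g \<in> borel_measurable borel"
  shows "(\<integral>\<^sup>+x. conv_dil_density M t g x \<partial>lborel) = (\<integral>\<^sup>+x. g x \<partial>lborel)"
proof -
  interpret prob_space M by fact
  interpret pair_sigma_finite M lborel ..
  have "(\<lambda>(y, x). ennreal (1 / t) * g ((x - y) / t)) \<in> borel_measurable (M \<Otimes>\<^sub>M lborel)"
    by measurable
  from Fubini'[OF this] have "(\<integral>\<^sup>+x. conv_dil_density M t g x \<partial>lborel)
      = \<integral>\<^sup>+y. \<integral>\<^sup>+x. ennreal (1 / t) * g ((x - y) / t) \<partial>lborel \<partial>M"
    by (simp add: conv_dil_density_def)
  also have "\<dots> = \<integral>\<^sup>+y. (\<integral>\<^sup>+x. g x \<partial>lborel) \<partial>M"
  proof (rule nn_integral_cong)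
    fix y
    have "(\<integral>\<^sup>+x. ennreal (1 / t) * g ((x - y) / t) \<partial>lborel)
        = ennreal t * (\<integral>\<^sup>+z. ennreal (1 / t) * g z \<partial>lborel)"
      using t by (subst nn_integral_real_affine[where c = t and t = y]) auto
    also have "\<dots> = (\<integral>\<^sup>+z. g z \<partial>lborel)"
      using t by (simp add: nn_integral_cmult mult.assoc[symmetric] flip: ennreal_mult)
    finally show "(\<integral>\<^sup>+x. ennreal (1 / t) * g ((x - y) / t) \<partial>lborel) = (\<integral>\<^sup>+x. g x \<partial>lborel)" .
  qed
  also have "\<dots> = (\<integral>\<^sup>+x. g x \<partial>lborel)"
    by (simp add: emeasure_space_1)
  finally show ?thesis .
qed

lemma Liminf_vanishing_mult_mono:
  fixes X Y :: "'a \<Rightarrow> ereal" and k :: "'a \<Rightarrow> real"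
  assumes F: "F \<noteq> bot" and k: "(k \<longlongrightarrow> 0) F" "\<And>x. 0 \<le> k x"
    and le: "\<forall>\<^sub>F x in F. Y x \<le> X x + ereal C"
  shows "Liminf F (\<lambda>x. ereal (k x) * Y x) \<le> Liminf F (\<lambda>x. ereal (k x) * X x)"
proof (rule ereal_le_epsilon2)
  fix e :: real assume "0 < e"
  have "((\<lambda>x. k x * C) \<longlongrightarrow> 0 * C) F"
    by (intro tendsto_intros k)
  with \<open>0 < e\<close> have "\<forall>\<^sub>F x in F. k x * C < e"
    by (simp add: order_tendsto_iff)
  with le have "\<forall>\<^sub>F x in F. ereal (k x) * Y x \<le> ereal (k x) * X x + ereal e"
  proof eventually_elim
    case (elim x)
    have "ereal (k x) * Y x \<le> ereal (k x) * (X x + ereal C)"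
      using elim k(2) by (intro ereal_mult_left_mono) auto
    also have "\<dots> \<le> ereal (k x) * X x + ereal e"
      using elim k(2)[of x] by (cases "X x") (auto simp: distrib_left)
    finally show ?case .
  qed
  then have "Liminf F (\<lambda>x. ereal (k x) * Y x) \<le> Liminf F (\<lambda>x. ereal (k x) * X x + ereal e)"
    by (rule Liminf_mono)
  also have "\<dots> = Liminf F (\<lambda>x. ereal (k x) * X x) + ereal e"
    using F by (rule Liminf_add_ereal_right) simp
  finally show "Liminf F (\<lambda>x. ereal (k x) * Y x) \<le> Liminf F (\<lambda>x. ereal (k x) * X x) + ereal e" .
qed

lemma Liminf_div_abs_ln_eq:
  fixes X Y :: "real \<Rightarrow> ereal"
  assumes "\<forall>\<^sub>F t in at_right 0. X t \<le> Y t + ereal C \<and> Y t \<le> X t + ereal C"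
  shows "Liminf (at_right 0) (\<lambda>t. X t / ereal \<bar>ln t\<bar>)
       = Liminf (at_right 0) (\<lambda>t. ereal (1 / \<bar>ln t\<bar>) * Y t)"
proof -
  have "\<forall>\<^sub>F t in at_right 0. X t / ereal \<bar>ln t\<bar> = ereal (1 / \<bar>ln t\<bar>) * X t"
    using eventually_at_right_real[of 0 1, OF zero_less_one]
    by eventually_elim (auto simp: divide_ereal_def mult.commute inverse_eq_divide)
  then have "Liminf (at_right 0) (\<lambda>t. X t / ereal \<bar>ln t\<bar>)
      = Liminf (at_right 0) (\<lambda>t. ereal (1 / \<bar>ln t\<bar>) * X t)"
    by (rule Liminf_eq)
  also have "\<dots> = Liminf (at_right 0) (\<lambda>t. ereal (1 / \<bar>ln t\<bar>) * Y t)"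
  proof -
    have "((\<lambda>t::real. 1 / \<bar>ln t\<bar>) \<longlongrightarrow> 0) (at_right 0)"
      by real_asymp
    with assms show ?thesis
      by (intro antisym Liminf_vanishing_mult_mono) (auto elim: eventually_mono)
  qed
  finally show ?thesis .
qed

lemma density_sum_if_emeasure_sum:
  fixes M :: "real measure" and g :: "'i \<Rightarrow> real \<Rightarrow> ennreal"
  assumes "finite I" "sets M = sets borel" and [measurable]: "\<And>i. i \<in> I \<Longrightarrow> g i \<in> borel_measurable borel"
    and M_sum: "\<And>A. A \<in> sets borel \<Longrightarrow> emeasure M A = (\<Sum>i\<in>I. emeasure (density lborel (g i)) A)"
  shows "M = density lborel (\<lambda>x. \<Sum>i\<in>I. g i x)"
proof (rule measure_eqI)
  fix A assume "A \<in> sets M"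
  with assms(2) have [measurable]: "A \<in> sets borel"
    by simp
  have "emeasure M A = (\<Sum>i\<in>I. \<integral>\<^sup>+x. g i x * indicator A x \<partial>lborel)"
    by (simp add: M_sum emeasure_density)
  also have "\<dots> = \<integral>\<^sup>+x. (\<Sum>i\<in>I. g i x) * indicator A x \<partial>lborel"
    unfolding sum_distrib_right by (rule nn_integral_sum[symmetric]) auto
  also have "\<dots> = emeasure (density lborel (\<lambda>x. \<Sum>i\<in>I. g i x)) A"
    by (rule emeasure_density[symmetric]) (use assms(1) in auto)
  finally show "emeasure M A = emeasure (density lborel (\<lambda>x. \<Sum>i\<in>I. g i x)) A" .
qed (simp add: assms(2))

lemma ent_conv_dil_density_sum_close:
  fixes \<mu> :: "real measure" and g :: "'i \<Rightarrow> real \<Rightarrow> ennreal" and a :: "'i \<Rightarrow> real"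
  assumes \<mu>: "prob_space \<mu>" "sets \<mu> = sets borel" and t: "0 < t" and I: "finite I"
    and [measurable]: "\<And>i. i \<in> I \<Longrightarrow> g i \<in> borel_measurable borel"
    and a_pos: "\<And>i. i \<in> I \<Longrightarrow> 0 < a i"
    and g_mass: "\<And>i. i \<in> I \<Longrightarrow> (\<integral>\<^sup>+x. g i x \<partial>lborel) = ennreal (a i)"
  defines "C \<equiv> (real (card I) + (\<Sum>i\<in>I. \<bar>ln (a i)\<bar>)) * (\<Sum>i\<in>I. a i)"
  shows "ent (\<mu> \<star> dil t (density lborel (\<lambda>x. \<Sum>i\<in>I. g i x)))
           \<le> (\<Sum>i\<in>I. ereal (a i) * ent (scale_measure (ennreal (1 / a i)) (\<mu> \<star> dil t (density lborel (g i))))) + C"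
    and "(\<Sum>i\<in>I. ereal (a i) * ent (scale_measure (ennreal (1 / a i)) (\<mu> \<star> dil t (density lborel (g i)))))
           \<le> ent (\<mu> \<star> dil t (density lborel (\<lambda>x. \<Sum>i\<in>I. g i x))) + C"
proof -
  have \<mu>_fin: "finite_measure \<mu>"
    using \<mu>(1) by (simp add: prob_space_def)
  have "(\<integral>\<^sup>+x. (\<Sum>i\<in>I. g i x) \<partial>lborel) = (\<Sum>i\<in>I. ennreal (a i))"
    using I by (subst nn_integral_sum) (auto simp: g_mass)
  then have "\<mu> \<star> dil t (density lborel (\<lambda>x. \<Sum>i\<in>I. g i x))
      = density lborel (conv_dil_density \<mu> t (\<lambda>x. \<Sum>i\<in>I. g i x))"
    using \<mu>_fin \<mu>(2) t I by (intro convolution_dil_density) auto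
  also have "conv_dil_density \<mu> t (\<lambda>x. \<Sum>i\<in>I. g i x) = (\<lambda>x. \<Sum>i\<in>I. conv_dil_density \<mu> t (g i) x)"
    using \<mu>(2) I by (intro ext conv_dil_density_sum) auto
  finally have sum: "\<mu> \<star> dil t (density lborel (\<lambda>x. \<Sum>i\<in>I. g i x))
      = density lborel (\<lambda>x. \<Sum>i\<in>I. conv_dil_density \<mu> t (g i) x)" .
  have parts: "\<mu> \<star> dil t (density lborel (g i)) = density lborel (conv_dil_density \<mu> t (g i))"
    if "i \<in> I" for i
    using \<mu>_fin \<mu>(2) t that g_mass[OF that] by (intro convolution_dil_density) auto
  have masses: "(\<integral>\<^sup>+x. conv_dil_density \<mu> t (g i) x \<partial>lborel) = ennreal (a i)" if "i \<in> I" for i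
    using \<mu> t that g_mass[OF that] by (simp add: nn_integral_conv_dil_density)
  show "ent (\<mu> \<star> dil t (density lborel (\<lambda>x. \<Sum>i\<in>I. g i x)))
           \<le> (\<Sum>i\<in>I. ereal (a i) * ent (scale_measure (ennreal (1 / a i)) (\<mu> \<star> dil t (density lborel (g i))))) + C"
       "(\<Sum>i\<in>I. ereal (a i) * ent (scale_measure (ennreal (1 / a i)) (\<mu> \<star> dil t (density lborel (g i)))))
           \<le> ent (\<mu> \<star> dil t (density lborel (\<lambda>x. \<Sum>i\<in>I. g i x))) + C"
    using ent_density_sum_close[of I "\<lambda>i. conv_dil_density \<mu> t (g i)" a] I \<mu>_fin \<mu>(2) a_pos masses
    by (simp_all add: sum parts C_def)
qed

theorem lemma2p4:
  fixes \<mu> \<nu> :: "real measure" and \<nu>i :: "nat \<Rightarrow> real measure"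
    and a :: "nat \<Rightarrow> real" and n :: nat
  assumes mu_prob: "prob_space \<mu>" and mu_sets: "sets \<mu> = sets borel"
    and nui_fin: "\<And>i. i \<in> {1..n} \<Longrightarrow> finite_measure (\<nu>i i)"
    and nui_sets: "\<And>i. i \<in> {1..n} \<Longrightarrow> sets (\<nu>i i) = sets borel"
    and nui_mass: "\<And>i. i \<in> {1..n} \<Longrightarrow> emeasure (\<nu>i i) UNIV = ennreal (a i)"
    and a_pos: "\<And>i. i \<in> {1..n} \<Longrightarrow> a i > 0"
    and nu_sets: "sets \<nu> = sets borel"
    and nu_sum: "\<And>A. A \<in> sets borel \<Longrightarrow> emeasure \<nu> A = (\<Sum>i\<in>{1..n}. emeasure (\<nu>i i) A)"
    and ent_fin: "\<And>i. i \<in> {1..n} \<Longrightarrow> \<bar>ent (scale_measure (ennreal (1 / a i)) (\<nu>i i))\<bar> \<noteq> \<infinity>"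
  shows "Liminf (at_right 0) (\<lambda>t. ent (\<mu> \<star> dil t \<nu>) / ereal \<bar>ln t\<bar>)
       = Liminf (at_right 0) (\<lambda>t. ereal (1 / \<bar>ln t\<bar>) *
            (\<Sum>i\<in>{1..n}. ereal (a i) * ent (scale_measure (ennreal (1 / a i)) (\<mu> \<star> dil t (\<nu>i i)))))"
proof -
  let ?I = "{1..n}"
  have "\<exists>g. g \<in> borel_measurable borel \<and> \<nu>i i = density lborel g" if "i \<in> ?I" for i
    using ent_fin[OF that] a_pos[OF that] by (intro ex_density_if_scaled_ent_finite) auto
  then obtain g where g_meas [measurable]: "\<And>i. i \<in> ?I \<Longrightarrow> g i \<in> borel_measurable borel"
    and nui_eq: "\<And>i. i \<in> ?I \<Longrightarrow> \<nu>i i = density lborel (g i)"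
    by metis
  have g_mass: "(\<integral>\<^sup>+x. g i x \<partial>lborel) = ennreal (a i)" if "i \<in> ?I" for i
    using nui_mass[OF that] g_meas[OF that] by (simp add: nui_eq[OF that] emeasure_density)
  have nu_eq: "\<nu> = density lborel (\<lambda>x. \<Sum>i\<in>?I. g i x)"
    using nu_sets nu_sum nui_eq by (intro density_sum_if_emeasure_sum) auto
  let ?Y = "\<lambda>t. \<Sum>i\<in>?I. ereal (a i) * ent (scale_measure (ennreal (1 / a i)) (\<mu> \<star> dil t (\<nu>i i)))"
  let ?C = "(real (card ?I) + (\<Sum>i\<in>?I. \<bar>ln (a i)\<bar>)) * (\<Sum>i\<in>?I. a i)"
  have "\<forall>\<^sub>F t in at_right 0.
      ent (\<mu> \<star> dil t \<nu>) \<le> ?Y t + ereal ?C \<and> ?Y t \<le> ent (\<mu> \<star> dil t \<nu>) + ereal ?C"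
    using eventually_at_right_less[of "0::real"]
  proof eventually_elim
    case (elim t)
    with ent_conv_dil_density_sum_close[of \<mu> t ?I g a, OF mu_prob mu_sets elim finite_atLeastAtMost
        g_meas a_pos g_mass]
    show ?case
      by (simp add: nu_eq nui_eq)
  qed
  then show ?thesis
    by (rule Liminf_div_abs_ln_eq)
qed

end
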